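(* Let $\mathbf{Q}^\star,\mathbf{Q},\mathbf{Q}_r,\mathbf{H}$ be as in the context, let $\lambda_j^\star$ be the $j$-th eigenvalue of $\mathbf{Q}^\star$, and $\delta^\star=\min\{\min_{j\in[r-1]}|\lambda_j^\star-\lambda_{j+1}^\star|,\ \lambda_r^\star\}$. If $\mathbf{H}$ is Hermitian, then $$\|\mathbf{Q}^\star-\mathbf{Q}_r\|_2\le O\!\left(\lambda_{r+1}^\star+\frac{\lambda_1^\star}{\delta^\star}\|\mathbf{H}\|_2\right).$$
   Context: $\mathbf{Q}^\star\in\mathbb{C}^{n\times n}$ is Hermitian positive semi-definite of rank $r^\star$ with eigenvalues $\lambda_1^\star\ge\lambda_2^\star\ge\dots\ge 0$ (zero beyond the rank). $\mathbf{H}\in\mathbb{C}^{n\times n}$, $\mathbf{Q}=\mathbf{Q}^\star+\mathbf{H}$, and $\mathbf{Q}_r=\mathbf{V}_r\boldsymbol{\Sigma}_r\mathbf{V}_r^\dagger$ with $\boldsymbol{\Sigma}_r$ the top-$r$ singular values of $\mathbf{Q}$ and $\mathbf{V}_r$ the corresponding left singular vectors. $\|\cdot\|_2$ is the spectral norm; $O(\cdot)$ hides an absolute constant. *)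

theory Defs
  imports "Jordan_Normal_Form.Matrix"
begin

definition adjoint_mat :: "complex mat \<Rightarrow> complex mat" where
  "adjoint_mat A = mat (dim_col A) (dim_row A) (\<lambda>(i,j). cnj (A $$ (j,i)))"

definition hermitian_mat :: "complex mat \<Rightarrow> bool" where
  "hermitian_mat A \<longleftrightarrow> A \<in> carrier_mat (dim_row A) (dim_row A) \<and> adjoint_mat A = A"

definition unitary_mat :: "nat \<Rightarrow> complex mat \<Rightarrow> bool" where
  "unitary_mat n U \<longleftrightarrow> U \<in> carrier_mat n n \<and> adjoint_mat U * U = 1\<^sub>m n \<and> U * adjoint_mat U = 1\<^sub>m n"

definition vnorm :: "complex vec \<Rightarrow> real" where
  "vnorm v = sqrt (\<Sum>i<dim_vec v. (cmod (v $ i))^2)"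

definition spec_norm :: "complex mat \<Rightarrow> real" where
  "spec_norm A = Sup {vnorm (A *\<^sub>v x) | x. x \<in> carrier_vec (dim_col A) \<and> vnorm x = 1}"

text \<open>Eigenvalues (1-indexed, \<open>lam 1 \<ge> lam 2 \<ge> \<dots> \<ge> lam n \<ge> 0\<close>, and \<open>lam j = 0\<close> for
  \<open>j > n\<close>) of a Hermitian PSD matrix, given through a unitary eigendecomposition
  \<open>Q = U diag(lam 1, \<dots>, lam n) U\<^sup>\<dagger>\<close>.\<close>
definition psd_ordered_eigendecomp :: "nat \<Rightarrow> complex mat \<Rightarrow> complex mat \<Rightarrow> (nat \<Rightarrow> real) \<Rightarrow> bool" where
  "psd_ordered_eigendecomp n Q U lam \<longleftrightarrow>
     unitary_mat n U \<and>
     Q = U * mat_diag n (\<lambda>i. complex_of_real (lam (i+1))) * adjoint_mat U \<and>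
     (\<forall>j k. 1 \<le> j \<longrightarrow> j \<le> k \<longrightarrow> lam k \<le> lam j) \<and>
     (\<forall>j. lam j \<ge> 0) \<and> (\<forall>j. j > n \<longrightarrow> lam j = 0)"

text \<open>Singular value decomposition \<open>Q = V diag(sig 0, \<dots>, sig (n-1)) W\<^sup>\<dagger>\<close> with singular
  values sorted nonincreasingly (0-indexed here); \<open>V\<close> holds the left singular vectors.\<close>
definition ordered_svd :: "nat \<Rightarrow> complex mat \<Rightarrow> complex mat \<Rightarrow> (nat \<Rightarrow> real) \<Rightarrow> complex mat \<Rightarrow> bool" where
  "ordered_svd n Q V sig W \<longleftrightarrow>
     unitary_mat n V \<and> unitary_mat n W \<and>
     Q = V * mat_diag n (\<lambda>i. complex_of_real (sig i)) * adjoint_mat W \<and>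
     (\<forall>i j. i \<le> j \<longrightarrow> j < n \<longrightarrow> sig j \<le> sig i) \<and> (\<forall>i<n. sig i \<ge> 0)"

definition trunc_rank :: "nat \<Rightarrow> nat \<Rightarrow> complex mat \<Rightarrow> (nat \<Rightarrow> real) \<Rightarrow> complex mat" where
  "trunc_rank n r V sig =
     (let Vr = mat n r (\<lambda>(i,j). V $$ (i,j)) in
      Vr * mat_diag r (\<lambda>i. complex_of_real (sig i)) * adjoint_mat Vr)"

definition eig_gap :: "(nat \<Rightarrow> real) \<Rightarrow> nat \<Rightarrow> real" where
  "eig_gap lam r = Min ({\<bar>lam j - lam (j+1)\<bar> | j. 1 \<le> j \<and> j \<le> r - 1} \<union> {lam r})"

end

theory Submission
  imports Defs "HOL-Analysis.L2_Norm" "Jordan_Normal_Form.Determinant"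
begin

text \<open>Write \<open>Q = Q\<^sup>\<star> + H = V \<Sigma> W\<^sup>\<dagger>\<close> and \<open>h = \<parallel>H\<parallel>\<close>. Weyl's inequality, obtained from a
  Courant--Fischer dimension count, gives \<open>|\<sigma>\<^sub>i - \<lambda>\<^sup>\<star>\<^sub>i\<^sub>+\<^sub>1| \<le> h\<close> for all singular values of \<open>Q\<close>.

  If \<open>2h < \<lambda>\<^sup>\<star>\<^sub>r\<close>, the top \<open>r\<close> singular values exceed \<open>h\<close>. As \<open>Q\<close> is Hermitian it maps
  \<open>v\<^sub>i \<mapsto> \<sigma>\<^sub>i w\<^sub>i\<close> and \<open>w\<^sub>i \<mapsto> \<sigma>\<^sub>i v\<^sub>i\<close>, so \<open>y = v\<^sub>i - w\<^sub>i\<close> satisfies \<open>(Q\<^sup>\<star> + \<sigma>\<^sub>i) y = -H y\<close>; since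
  \<open>Q\<^sup>\<star>\<close> is positive semidefinite this forces \<open>\<sigma>\<^sub>i \<parallel>y\<parallel> \<le> h \<parallel>y\<parallel>\<close>, hence \<open>y = 0\<close>. Thus \<open>Q\<^sub>r\<close> is the
  truncated SVD of \<open>Q\<close> and \<open>\<parallel>Q\<^sup>\<star> - Q\<^sub>r\<parallel> \<le> \<parallel>Q - Q\<^sub>r\<parallel> + h \<le> \<lambda>\<^sup>\<star>\<^sub>r\<^sub>+\<^sub>1 + 2h\<close>.

  Otherwise \<open>\<delta>\<^sup>\<star> \<le> \<lambda>\<^sup>\<star>\<^sub>r \<le> 2h\<close>, and the crude bound \<open>\<parallel>Q\<^sup>\<star>\<parallel> + \<parallel>Q\<^sub>r\<parallel> \<le> 2\<lambda>\<^sup>\<star>\<^sub>1 + h\<close> is at most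
  \<open>5 (\<lambda>\<^sup>\<star>\<^sub>1 / \<delta>\<^sup>\<star>) h\<close>. Both cases give the claim with \<open>C = 5\<close>.\<close>

lemma vnorm_eq_L2_set: "vnorm v = L2_set (\<lambda>i. cmod (v $ i)) {..<dim_vec v}"
  unfolding vnorm_def L2_set_def by simp

lemma vnorm_nonneg [simp]: "0 \<le> vnorm v"
  unfolding vnorm_eq_L2_set by simp

lemma vnorm_le_scaled:
  assumes "dim_vec x = dim_vec y" "0 \<le> c" "\<And>i. i < dim_vec y \<Longrightarrow> cmod (x $ i) \<le> c * cmod (y $ i)"
  shows "vnorm x \<le> c * vnorm y"
proof -
  have "vnorm x = L2_set (\<lambda>i. cmod (x $ i)) {..<dim_vec y}"
    using assms(1) vnorm_eq_L2_set by simp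
  also have "\<dots> \<le> L2_set (\<lambda>i. c * cmod (y $ i)) {..<dim_vec y}"
    using assms by (intro L2_set_mono) auto
  also have "\<dots> = c * vnorm y"
    unfolding vnorm_eq_L2_set using assms(2) by (rule L2_set_right_distrib[symmetric])
  finally show ?thesis .
qed

lemma vnorm_ge_scaled:
  assumes "dim_vec x = dim_vec y" "0 \<le> c" "\<And>i. i < dim_vec y \<Longrightarrow> c * cmod (y $ i) \<le> cmod (x $ i)"
  shows "c * vnorm y \<le> vnorm x"
proof -
  have "c * vnorm y = L2_set (\<lambda>i. c * cmod (y $ i)) {..<dim_vec y}"
    unfolding vnorm_eq_L2_set using assms(2) by (rule L2_set_right_distrib)
  also have "\<dots> \<le> L2_set (\<lambda>i. cmod (x $ i)) {..<dim_vec y}"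
    using assms by (intro L2_set_mono) auto
  also have "\<dots> = vnorm x"
    using assms(1) vnorm_eq_L2_set by simp
  finally show ?thesis .
qed

lemma vnorm_smult: "vnorm (k \<cdot>\<^sub>v x) = cmod k * vnorm x"
  by (intro antisym vnorm_le_scaled vnorm_ge_scaled) (auto simp: norm_mult)

lemma vnorm_uminus [simp]: "vnorm (- x) = vnorm x"
  using vnorm_le_scaled[of "- x" x 1] vnorm_ge_scaled[of "- x" x 1] by simp

lemma vnorm_add_le:
  assumes "dim_vec x = dim_vec y"
  shows "vnorm (x + y) \<le> vnorm x + vnorm y"
proof -
  have "vnorm (x + y) = L2_set (\<lambda>i. cmod ((x + y) $ i)) {..<dim_vec y}"
    unfolding vnorm_eq_L2_set by simp
  also have "\<dots> \<le> L2_set (\<lambda>i. cmod (x $ i) + cmod (y $ i)) {..<dim_vec y}"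
    using assms by (intro L2_set_mono) (auto intro: norm_triangle_ineq)
  also have "\<dots> \<le> vnorm x + vnorm y"
    unfolding vnorm_eq_L2_set using assms by (simp add: L2_set_triangle_ineq)
  finally show ?thesis .
qed

lemma vnorm_eq_0_iff: "vnorm x = 0 \<longleftrightarrow> x = 0\<^sub>v (dim_vec x)"
proof -
  have "vnorm x = 0 \<longleftrightarrow> (\<forall>i<dim_vec x. x $ i = 0)"
    unfolding vnorm_eq_L2_set by (subst L2_set_eq_0_iff) auto
  also have "\<dots> \<longleftrightarrow> x = 0\<^sub>v (dim_vec x)"
    by (auto intro!: eq_vecI) (metis index_zero_vec(1))
  finally show ?thesis .
qed

lemma cmod_le_vnorm: "i < dim_vec x \<Longrightarrow> cmod (x $ i) \<le> vnorm x"
  unfolding vnorm_eq_L2_set by (rule member_le_L2_set) auto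

lemma vnorm_unit_vec: "i < n \<Longrightarrow> vnorm (unit_vec n i :: complex vec) = 1"
  unfolding vnorm_def by (simp add: unit_vec_def if_distrib[of "\<lambda>x. (cmod x)\<^sup>2"] sum.If_cases)

lemma vnorm_square: "complex_of_real ((vnorm x)\<^sup>2) = x \<bullet>c x"
proof -
  have "(vnorm x)\<^sup>2 = (\<Sum>i<dim_vec x. (cmod (x $ i))\<^sup>2)"
    unfolding vnorm_def by (simp add: sum_nonneg)
  then show ?thesis
    by (simp add: scalar_prod_def atLeast0LessThan complex_mult_cnj cmod_power2 flip: of_real_power)
qed

lemma adjoint_mat_carrier [simp]: "adjoint_mat A \<in> carrier_mat (dim_col A) (dim_row A)"
  unfolding adjoint_mat_def by simp

lemma adjoint_mat_dim [simp]:
  "dim_row (adjoint_mat A) = dim_col A" "dim_col (adjoint_mat A) = dim_row A"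
  unfolding adjoint_mat_def by simp_all

lemma adjoint_mat_index [simp]:
  "i < dim_col A \<Longrightarrow> j < dim_row A \<Longrightarrow> adjoint_mat A $$ (i, j) = cnj (A $$ (j, i))"
  unfolding adjoint_mat_def by simp

lemma adjoint_mat_adjoint_mat [simp]: "adjoint_mat (adjoint_mat A) = A"
  by (rule eq_matI) auto

lemma adjoint_mat_add:
  "A \<in> carrier_mat n m \<Longrightarrow> B \<in> carrier_mat n m \<Longrightarrow> adjoint_mat (A + B) = adjoint_mat A + adjoint_mat B"
  by (rule eq_matI) auto

lemma adjoint_mat_mult:
  assumes "A \<in> carrier_mat n k" "B \<in> carrier_mat k m"
  shows "adjoint_mat (A * B) = adjoint_mat B * adjoint_mat A"
proof (rule eq_matI)
  fix i j assume "i < dim_row (adjoint_mat B * adjoint_mat A)" "j < dim_col (adjoint_mat B * adjoint_mat A)"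
  then show "adjoint_mat (A * B) $$ (i, j) = (adjoint_mat B * adjoint_mat A) $$ (i, j)"
    using assms by (simp add: scalar_prod_def mult.commute)
qed (use assms in auto)

lemma adjoint_mat_mat_diag_real:
  "adjoint_mat (mat_diag n (\<lambda>i. complex_of_real (d i))) = mat_diag n (\<lambda>i. complex_of_real (d i))"
  by (rule eq_matI) (auto simp: mat_diag_def)

lemma cscalar_prod_adjoint_mat:
  assumes A: "A \<in> carrier_mat n m" and x: "x \<in> carrier_vec m" and y: "y \<in> carrier_vec n"
  shows "(A *\<^sub>v x) \<bullet>c y = x \<bullet>c (adjoint_mat A *\<^sub>v y)"
proof -
  have "(A *\<^sub>v x) \<bullet>c y = (\<Sum>i<n. \<Sum>j<m. A $$ (i, j) * x $ j * cnj (y $ i))"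
    using A x y by (auto simp: scalar_prod_def atLeast0LessThan sum_distrib_right intro!: sum.cong)
  also have "\<dots> = (\<Sum>j<m. \<Sum>i<n. A $$ (i, j) * x $ j * cnj (y $ i))"
    by (rule sum.swap)
  also have "\<dots> = x \<bullet>c (adjoint_mat A *\<^sub>v y)"
    using A x y by (auto simp: scalar_prod_def atLeast0LessThan sum_distrib_left intro!: sum.cong)
  finally show ?thesis .
qed

lemma unitary_mat_carrier: "unitary_mat n U \<Longrightarrow> U \<in> carrier_mat n n"
  unfolding unitary_mat_def by simp

lemma unitary_mat_adjoint_mat: "unitary_mat n U \<Longrightarrow> unitary_mat n (adjoint_mat U)"
  unfolding unitary_mat_def by auto

lemma unitary_mat_adjoint_mult_vec_cancel:
  assumes U: "unitary_mat n U" and x: "x \<in> carrier_vec n"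
  shows "adjoint_mat U *\<^sub>v (U *\<^sub>v x) = x"
proof -
  have "adjoint_mat U *\<^sub>v (U *\<^sub>v x) = (adjoint_mat U * U) *\<^sub>v x"
    using unitary_mat_carrier[OF U] x by (subst assoc_mult_mat_vec) auto
  then show ?thesis
    using U x unfolding unitary_mat_def by simp
qed

lemma unitary_mat_mult_vec_adjoint_cancel:
  "unitary_mat n U \<Longrightarrow> x \<in> carrier_vec n \<Longrightarrow> U *\<^sub>v (adjoint_mat U *\<^sub>v x) = x"
  using unitary_mat_adjoint_mult_vec_cancel[OF unitary_mat_adjoint_mat] by fastforce

lemma unitary_mat_vnorm_mult_vec:
  assumes U: "unitary_mat n U" and x: "x \<in> carrier_vec n"
  shows "vnorm (U *\<^sub>v x) = vnorm x"
proof -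
  have Uc: "U \<in> carrier_mat n n"
    using U by (rule unitary_mat_carrier)
  have "complex_of_real ((vnorm (U *\<^sub>v x))\<^sup>2) = (U *\<^sub>v x) \<bullet>c (U *\<^sub>v x)"
    by (rule vnorm_square)
  also have "\<dots> = x \<bullet>c (adjoint_mat U *\<^sub>v (U *\<^sub>v x))"
    using Uc x by (intro cscalar_prod_adjoint_mat) auto
  also have "\<dots> = complex_of_real ((vnorm x)\<^sup>2)"
    unfolding unitary_mat_adjoint_mult_vec_cancel[OF U x] by (rule vnorm_square[symmetric])
  finally have "(vnorm (U *\<^sub>v x))\<^sup>2 = (vnorm x)\<^sup>2"
    using of_real_eq_iff by blast
  then show ?thesis
    by (simp add: power2_eq_iff_nonneg)
qed

lemma mult_mat_vec_triple:
  assumes "A \<in> carrier_mat n n" "D \<in> carrier_mat n n" "B \<in> carrier_mat n n" "x \<in> carrier_vec n"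
  shows "(A * D * B) *\<^sub>v x = A *\<^sub>v (D *\<^sub>v (B *\<^sub>v x))"
proof -
  have "(A * D * B) *\<^sub>v x = (A * D) *\<^sub>v (B *\<^sub>v x)"
    using assms by (intro assoc_mult_mat_vec) auto
  also have "\<dots> = A *\<^sub>v (D *\<^sub>v (B *\<^sub>v x))"
    using assms by (intro assoc_mult_mat_vec) auto
  finally show ?thesis .
qed

lemma mult_mat_vec_unit_vec:
  "(A :: 'a :: semiring_1 mat) \<in> carrier_mat m n \<Longrightarrow> i < n \<Longrightarrow> A *\<^sub>v unit_vec n i = col A i"
  by (rule eq_vecI) (auto simp: row_def)

section \<open>The spectral norm\<close>

lemma bdd_above_spec_norm_set:
  assumes A: "A \<in> carrier_mat n n"
  shows "bdd_above {vnorm (A *\<^sub>v x) | x. x \<in> carrier_vec (dim_col A) \<and> vnorm x = 1}"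
proof (rule bdd_aboveI)
  fix t assume "t \<in> {vnorm (A *\<^sub>v x) | x. x \<in> carrier_vec (dim_col A) \<and> vnorm x = 1}"
  then obtain x where x: "x \<in> carrier_vec n" "vnorm x = 1" and t: "t = vnorm (A *\<^sub>v x)"
    using A by auto
  have "t \<le> (\<Sum>i<n. cmod ((A *\<^sub>v x) $ i))"
    unfolding t vnorm_eq_L2_set using A L2_set_le_sum_abs[of "\<lambda>i. cmod ((A *\<^sub>v x) $ i)" "{..<n}"]
    by simp
  also have "\<dots> \<le> (\<Sum>i<n. \<Sum>j<n. cmod (A $$ (i, j)))"
  proof (rule sum_mono)
    fix i assume i: "i \<in> {..<n}"
    have "cmod ((A *\<^sub>v x) $ i) \<le> (\<Sum>j<n. cmod (A $$ (i, j) * x $ j))"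
      using A x i by (simp add: scalar_prod_def atLeast0LessThan norm_sum)
    also have "\<dots> \<le> (\<Sum>j<n. cmod (A $$ (i, j)))"
      using x cmod_le_vnorm[of _ x] by (intro sum_mono) (simp add: norm_mult mult_left_le)
    finally show "cmod ((A *\<^sub>v x) $ i) \<le> (\<Sum>j<n. cmod (A $$ (i, j)))" .
  qed
  finally show "t \<le> (\<Sum>i<n. \<Sum>j<n. cmod (A $$ (i, j)))" .
qed

lemma spec_norm_mult_vec_le:
  assumes A: "A \<in> carrier_mat n n" and x: "x \<in> carrier_vec n"
  shows "vnorm (A *\<^sub>v x) \<le> spec_norm A * vnorm x"
proof (cases "vnorm x = 0")
  case True
  then show ?thesis
    using A x vnorm_eq_0_iff[of x] vnorm_eq_0_iff[of "A *\<^sub>v x"] by auto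
next
  case False
  then have pos: "0 < vnorm x"
    using vnorm_nonneg[of x] by linarith
  define y where "y = complex_of_real (1 / vnorm x) \<cdot>\<^sub>v x"
  have y: "y \<in> carrier_vec n" "vnorm y = 1"
    using x pos unfolding y_def by (auto simp: vnorm_smult norm_divide)
  have "vnorm (A *\<^sub>v y) \<le> spec_norm A"
    unfolding spec_norm_def using y A by (intro cSup_upper bdd_above_spec_norm_set) auto
  moreover have "vnorm (A *\<^sub>v y) = vnorm (A *\<^sub>v x) / vnorm x"
    unfolding y_def using A x pos by (simp add: mult_mat_vec vnorm_smult norm_divide)
  ultimately show ?thesis
    using pos by (simp add: divide_le_eq)
qed

lemma spec_norm_leI:
  assumes A: "A \<in> carrier_mat n n" and n: "0 < n"
    and bound: "\<And>x. x \<in> carrier_vec n \<Longrightarrow> vnorm (A *\<^sub>v x) \<le> c * vnorm x"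
  shows "spec_norm A \<le> c"
  \<comment> \<open>For \<open>n = 0\<close> the supremum in \<open>spec_norm\<close> ranges over the empty set and is unspecified.\<close>
  unfolding spec_norm_def
proof (rule cSup_least)
  show "{vnorm (A *\<^sub>v x) | x. x \<in> carrier_vec (dim_col A) \<and> vnorm x = 1} \<noteq> {}"
    using A vnorm_unit_vec[OF n] by (auto intro!: exI[of _ "unit_vec n 0"])
qed (use A bound in fastforce)

lemma spec_norm_nonneg:
  assumes A: "A \<in> carrier_mat n n" and n: "0 < n"
  shows "0 \<le> spec_norm A"
proof -
  have "vnorm (A *\<^sub>v unit_vec n 0) \<le> spec_norm A"
    using spec_norm_mult_vec_le[OF A, of "unit_vec n 0"] vnorm_unit_vec[OF n] by simp
  then show ?thesis
    by (rule order_trans[OF vnorm_nonneg])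
qed

lemma spec_norm_uminus [simp]: "spec_norm (- A) = spec_norm A"
proof -
  have "vnorm (- A *\<^sub>v x) = vnorm (A *\<^sub>v x)" if "x \<in> carrier_vec (dim_col A)" for x
    using that by (simp add: uminus_mult_mat_vec)
  then show ?thesis
    unfolding spec_norm_def by (intro arg_cong[where f = Sup]) force
qed

lemma spec_norm_add_le:
  assumes A: "A \<in> carrier_mat n n" and B: "B \<in> carrier_mat n n" and n: "0 < n"
  shows "spec_norm (A + B) \<le> spec_norm A + spec_norm B"
proof (rule spec_norm_leI[OF _ n])
  fix x :: "complex vec" assume x: "x \<in> carrier_vec n"
  have "vnorm ((A + B) *\<^sub>v x) \<le> vnorm (A *\<^sub>v x) + vnorm (B *\<^sub>v x)"
    using A B x by (simp add: add_mult_distrib_mat_vec vnorm_add_le)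
  also have "\<dots> \<le> (spec_norm A + spec_norm B) * vnorm x"
    using spec_norm_mult_vec_le[OF A x] spec_norm_mult_vec_le[OF B x] by (simp add: algebra_simps)
  finally show "vnorm ((A + B) *\<^sub>v x) \<le> (spec_norm A + spec_norm B) * vnorm x" .
qed (use A B in simp)

lemma spec_norm_diff_le:
  assumes A: "A \<in> carrier_mat n n" and B: "B \<in> carrier_mat n n" and n: "0 < n"
  shows "spec_norm (A - B) \<le> spec_norm A + spec_norm B"
proof -
  have "A - B = A + - B"
    using A B by (intro eq_matI) auto
  then show ?thesis
    using spec_norm_add_le[OF A _ n, of "- B"] B by simp
qed

lemma spec_norm_minus_commute:
  assumes "A \<in> carrier_mat n n" "B \<in> carrier_mat n n"
  shows "spec_norm (A - B) = spec_norm (B - A)"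
proof -
  have "A - B = - (B - A)"
    using assms by (intro eq_matI) auto
  then show ?thesis
    by simp
qed

lemma dim_mat_diag [simp]: "dim_row (mat_diag n f) = n" "dim_col (mat_diag n f) = n"
  using mat_diag_dim by blast+

lemma mat_diag_mult_vec:
  "b \<in> carrier_vec n \<Longrightarrow> mat_diag n f *\<^sub>v b = vec n (\<lambda>k. f k * b $ k)"
proof (rule eq_vecI)
  fix i assume b: "b \<in> carrier_vec n" and "i < dim_vec (vec n (\<lambda>k. f k * b $ k))"
  then have i: "i < n"
    by simp
  have "(mat_diag n f *\<^sub>v b) $ i = (\<Sum>j<n. (if i = j then f j else 0) * b $ j)"
    using b i by (simp add: mat_diag_def scalar_prod_def atLeast0LessThan)
  also have "\<dots> = (\<Sum>j<n. if j = i then f i * b $ i else 0)"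
    by (rule sum.cong) auto
  finally show "(mat_diag n f *\<^sub>v b) $ i = vec n (\<lambda>k. f k * b $ k) $ i"
    using i by simp
qed (simp add: mat_diag_def)

lemma vnorm_mat_diag_mult_vec_le:
  assumes b: "b \<in> carrier_vec n" and c: "0 \<le> c"
    and bound: "\<And>k. k < n \<Longrightarrow> b $ k \<noteq> 0 \<Longrightarrow> cmod (f k) \<le> c"
  shows "vnorm (mat_diag n f *\<^sub>v b) \<le> c * vnorm b"
proof (rule vnorm_le_scaled)
  fix k assume "k < dim_vec b"
  then show "cmod ((mat_diag n f *\<^sub>v b) $ k) \<le> c * cmod (b $ k)"
    using b bound[of k] by (cases "b $ k = 0") (auto simp: mat_diag_mult_vec norm_mult mult_right_mono)
qed (use b c in \<open>auto simp: mat_diag_def\<close>)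

lemma vnorm_mat_diag_mult_vec_ge:
  assumes b: "b \<in> carrier_vec n" and c: "0 \<le> c"
    and bound: "\<And>k. k < n \<Longrightarrow> b $ k \<noteq> 0 \<Longrightarrow> c \<le> cmod (f k)"
  shows "c * vnorm b \<le> vnorm (mat_diag n f *\<^sub>v b)"
proof (rule vnorm_ge_scaled)
  fix k assume "k < dim_vec b"
  then show "c * cmod (b $ k) \<le> cmod ((mat_diag n f *\<^sub>v b) $ k)"
    using b bound[of k] by (cases "b $ k = 0") (auto simp: mat_diag_mult_vec norm_mult mult_right_mono)
qed (use b c in \<open>auto simp: mat_diag_def\<close>)

lemma mat_diag_sandwich_carrier:
  "U \<in> carrier_mat n n \<Longrightarrow> W \<in> carrier_mat n n \<Longrightarrow> U * mat_diag n d * adjoint_mat W \<in> carrier_mat n n"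
  by (metis adjoint_mat_carrier carrier_matD mat_diag_dim mult_carrier_mat)

lemma spec_norm_unitary_diag_le:
  assumes U: "unitary_mat n U" and W: "unitary_mat n W" and n: "0 < n"
    and bound: "\<And>k. k < n \<Longrightarrow> cmod (d k) \<le> c"
  shows "spec_norm (U * mat_diag n d * adjoint_mat W) \<le> c"
proof (rule spec_norm_leI[OF _ n])
  have Uc: "U \<in> carrier_mat n n" and Wc: "adjoint_mat W \<in> carrier_mat n n"
    using U W unitary_mat_carrier unitary_mat_adjoint_mat by blast+
  show "U * mat_diag n d * adjoint_mat W \<in> carrier_mat n n"
    using U W unitary_mat_carrier mat_diag_sandwich_carrier by blast
  fix x :: "complex vec" assume x: "x \<in> carrier_vec n"
  have Wx: "adjoint_mat W *\<^sub>v x \<in> carrier_vec n"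
    using Wc x by simp
  have "vnorm ((U * mat_diag n d * adjoint_mat W) *\<^sub>v x) = vnorm (U *\<^sub>v (mat_diag n d *\<^sub>v (adjoint_mat W *\<^sub>v x)))"
    using Uc Wc x by (simp add: mult_mat_vec_triple)
  also have "\<dots> = vnorm (mat_diag n d *\<^sub>v (adjoint_mat W *\<^sub>v x))"
    by (intro unitary_mat_vnorm_mult_vec[OF U] mult_mat_vec_carrier[OF mat_diag_dim Wx])
  also have "\<dots> \<le> c * vnorm (adjoint_mat W *\<^sub>v x)"
    using Wc x bound order_trans[OF norm_ge_zero bound[OF n]]
    by (intro vnorm_mat_diag_mult_vec_le[of _ n]) auto
  also have "vnorm (adjoint_mat W *\<^sub>v x) = vnorm x"
    using unitary_mat_adjoint_mat[OF W] x by (rule unitary_mat_vnorm_mult_vec)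
  finally show "vnorm ((U * mat_diag n d * adjoint_mat W) *\<^sub>v x) \<le> c * vnorm x" .
qed

lemma mat_diag_sandwich_diff:
  fixes d e :: "nat \<Rightarrow> 'a :: comm_ring_1"
  assumes "A \<in> carrier_mat m n" "B \<in> carrier_mat n k"
  shows "A * mat_diag n d * B - A * mat_diag n e * B = A * mat_diag n (\<lambda>i. d i - e i) * B"
proof -
  have diag: "mat_diag n d - mat_diag n e = mat_diag n (\<lambda>i. d i - e i)"
    by (rule eq_matI) (auto simp: mat_diag_def)
  have "A * mat_diag n d * B - A * mat_diag n e * B = (A * mat_diag n d - A * mat_diag n e) * B"
    using assms by (intro minus_mult_distrib_mat[symmetric]) auto
  also have "A * mat_diag n d - A * mat_diag n e = A * (mat_diag n d - mat_diag n e)"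
    using assms by (intro mult_minus_distrib_mat[symmetric]) auto
  finally show ?thesis
    using diag by simp
qed

lemma adjoint_mat_mult_mult:
  assumes "A \<in> carrier_mat n n" "B \<in> carrier_mat n n" "C \<in> carrier_mat n n"
  shows "adjoint_mat (A * B * C) = adjoint_mat C * adjoint_mat B * adjoint_mat A"
proof -
  have outer: "adjoint_mat (A * B * C) = adjoint_mat C * adjoint_mat (A * B)"
    using assms by (intro adjoint_mat_mult[of _ n n]) auto
  have inner: "adjoint_mat (A * B) = adjoint_mat B * adjoint_mat A"
    using assms by (intro adjoint_mat_mult[of _ n n]) auto
  show ?thesis
    unfolding outer inner using assms by (intro assoc_mult_mat[symmetric]) auto
qed

lemma ordered_svd_carrier:
  assumes "ordered_svd n A U d W"
  shows "A \<in> carrier_mat n n"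
proof -
  have "U \<in> carrier_mat n n" "W \<in> carrier_mat n n"
    using assms unitary_mat_carrier unfolding ordered_svd_def by blast+
  then show ?thesis
    using assms unfolding ordered_svd_def by (simp add: mat_diag_sandwich_carrier)
qed

lemma ordered_svd_of_eigendecomp:
  "psd_ordered_eigendecomp n A U lam \<Longrightarrow> ordered_svd n A U (\<lambda>i. lam (i + 1)) U"
  unfolding psd_ordered_eigendecomp_def ordered_svd_def by auto

lemma hermitian_mat_of_eigendecomp:
  assumes "psd_ordered_eigendecomp n A U lam"
  shows "hermitian_mat A"
proof -
  have U: "U \<in> carrier_mat n n" "adjoint_mat U \<in> carrier_mat n n"
    using assms unitary_mat_carrier unitary_mat_adjoint_mat unfolding psd_ordered_eigendecomp_def by blast+
  have A: "A = U * mat_diag n (\<lambda>i. complex_of_real (lam (i + 1))) * adjoint_mat U"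
    using assms unfolding psd_ordered_eigendecomp_def by blast
  show ?thesis
    unfolding hermitian_mat_def A using U
    by (simp add: adjoint_mat_mult_mult adjoint_mat_mat_diag_real mat_diag_sandwich_carrier)
qed

lemma hermitian_mat_add:
  "hermitian_mat A \<Longrightarrow> hermitian_mat B \<Longrightarrow> B \<in> carrier_mat (dim_row A) (dim_row A) \<Longrightarrow> hermitian_mat (A + B)"
  unfolding hermitian_mat_def using adjoint_mat_add[of A "dim_row A" "dim_row A" B] by auto

lemma ordered_svd_hermitian_swap:
  assumes "hermitian_mat A" "ordered_svd n A V s W"
  shows "A = W * mat_diag n (\<lambda>i. complex_of_real (s i)) * adjoint_mat V"
proof -
  have A: "A = V * mat_diag n (\<lambda>i. complex_of_real (s i)) * adjoint_mat W"
    and V: "V \<in> carrier_mat n n" "adjoint_mat V \<in> carrier_mat n n"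
    and W: "W \<in> carrier_mat n n" "adjoint_mat W \<in> carrier_mat n n"
    using assms(2) unitary_mat_carrier unitary_mat_adjoint_mat unfolding ordered_svd_def by blast+
  have "A = adjoint_mat A"
    using assms(1) unfolding hermitian_mat_def by simp
  also have "\<dots> = W * mat_diag n (\<lambda>i. complex_of_real (s i)) * adjoint_mat V"
    using V W by (subst A) (simp add: adjoint_mat_mult_mult adjoint_mat_mat_diag_real)
  finally show ?thesis .
qed

lemma ordered_svd_vnorm_mult_vec:
  assumes svd: "ordered_svd n A V s W" and x: "x \<in> carrier_vec n"
  shows "vnorm (A *\<^sub>v x) = vnorm (mat_diag n (\<lambda>i. complex_of_real (s i)) *\<^sub>v (adjoint_mat W *\<^sub>v x))"
proof -
  have V: "unitary_mat n V" and W: "unitary_mat n W"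
    and A: "A = V * mat_diag n (\<lambda>i. complex_of_real (s i)) * adjoint_mat W"
    using svd unfolding ordered_svd_def by blast+
  have Wx: "adjoint_mat W *\<^sub>v x \<in> carrier_vec n"
    using unitary_mat_carrier[OF unitary_mat_adjoint_mat[OF W]] x by (rule mult_mat_vec_carrier)
  have "A *\<^sub>v x = V *\<^sub>v (mat_diag n (\<lambda>i. complex_of_real (s i)) *\<^sub>v (adjoint_mat W *\<^sub>v x))"
    unfolding A using V W x unitary_mat_carrier unitary_mat_adjoint_mat by (intro mult_mat_vec_triple) auto
  then show ?thesis
    using unitary_mat_vnorm_mult_vec[OF V mult_mat_vec_carrier[OF mat_diag_dim Wx]] by simp
qed

section \<open>Weyl's inequality for singular values\<close>

lemma homogeneous_system_nontrivial_solution: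
  fixes B :: "'a :: field mat"
  assumes B: "B \<in> carrier_mat n n" and qp: "q < p" and pn: "p \<le> n"
  shows "\<exists>a \<in> carrier_vec n. a \<noteq> 0\<^sub>v n \<and> (\<forall>k. p \<le> k \<longrightarrow> k < n \<longrightarrow> a $ k = 0)
           \<and> (\<forall>k<q. (B *\<^sub>v a) $ k = 0)"
proof -
  \<comment> \<open>The first \<open>q\<close> equations on the first \<open>p\<close> unknowns, padded by zero rows, form a singular
    \<open>p \<times> p\<close> matrix.\<close>
  define c where "c i = vec p (\<lambda>j. if i < q then B $$ (i, j) else 0)" for i
  define M where "M = mat\<^sub>r p p (\<lambda>i. if i = q then 0\<^sub>v p else c i)"
  have "det M = 0"
    unfolding M_def by (rule det_row_0[OF qp]) (auto simp: c_def)
  then obtain v where v: "v \<in> carrier_vec p" "v \<noteq> 0\<^sub>v p" "M *\<^sub>v v = 0\<^sub>v p"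
    using det_0_iff_vec_prod_zero_field[of M p] unfolding M_def by auto
  define a where "a = vec n (\<lambda>j. if j < p then v $ j else 0)"
  obtain j where j: "j < p" "v $ j \<noteq> 0"
    using v(1,2) by (metis carrier_vecD eq_vecI index_zero_vec(1,2))
  have "a $ j \<noteq> 0"
    using j pn unfolding a_def by simp
  then have "a \<noteq> 0\<^sub>v n"
    using j pn by auto
  moreover have "(B *\<^sub>v a) $ k = 0" if k: "k < q" for k
  proof -
    have "(B *\<^sub>v a) $ k = (\<Sum>j<p. B $$ (k, j) * v $ j)"
      using B k qp pn
      by (auto simp: a_def scalar_prod_def atLeast0LessThan split: if_splits
          intro!: sum.mono_neutral_cong_right)
    also have "\<dots> = (M *\<^sub>v v) $ k"
      using k qp v(1) by (simp add: M_def c_def scalar_prod_def atLeast0LessThan)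
    finally show ?thesis
      using v(3) k qp by simp
  qed
  ultimately show ?thesis
    unfolding a_def by auto
qed

lemma ordered_svd_vnorm_mult_vec_ge:
  assumes B: "ordered_svd n B V b W" and c: "c \<in> carrier_vec n" and k: "k < n"
    and supp: "\<And>j. k < j \<Longrightarrow> j < n \<Longrightarrow> c $ j = 0"
  shows "b k * vnorm c \<le> vnorm (B *\<^sub>v (W *\<^sub>v c))"
proof -
  have W: "unitary_mat n W"
    and b: "\<And>i j. i \<le> j \<Longrightarrow> j < n \<Longrightarrow> b j \<le> b i" "\<And>i. i < n \<Longrightarrow> 0 \<le> b i"
    using B unfolding ordered_svd_def by blast+
  have Wc: "W *\<^sub>v c \<in> carrier_vec n"
    using unitary_mat_carrier[OF W] c by simp
  show ?thesis
    unfolding ordered_svd_vnorm_mult_vec[OF B Wc] unitary_mat_adjoint_mult_vec_cancel[OF W c]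
    using c b k supp by (intro vnorm_mat_diag_mult_vec_ge) (auto simp: not_le[symmetric])
qed

lemma ordered_svd_vnorm_mult_vec_le:
  assumes A: "ordered_svd n A U a X" and x: "x \<in> carrier_vec n" and k: "k < n"
    and orth: "\<And>j. j < k \<Longrightarrow> (adjoint_mat X *\<^sub>v x) $ j = 0"
  shows "vnorm (A *\<^sub>v x) \<le> a k * vnorm x"
proof -
  have X: "unitary_mat n X"
    and a: "\<And>i j. i \<le> j \<Longrightarrow> j < n \<Longrightarrow> a j \<le> a i" "\<And>i. i < n \<Longrightarrow> 0 \<le> a i"
    using A unfolding ordered_svd_def by blast+
  have "cmod (complex_of_real (a j)) \<le> a k" if "j < n" "(adjoint_mat X *\<^sub>v x) $ j \<noteq> 0" for j
  proof -
    have "k \<le> j"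
      using that(2) orth by (metis not_le)
    then show ?thesis
      using a(1)[OF \<open>k \<le> j\<close> that(1)] a(2)[OF that(1)] by simp
  qed
  then have "vnorm (A *\<^sub>v x) \<le> a k * vnorm (adjoint_mat X *\<^sub>v x)"
    unfolding ordered_svd_vnorm_mult_vec[OF A x]
    using unitary_mat_carrier[OF unitary_mat_adjoint_mat[OF X]] x a(2)[OF k]
    by (intro vnorm_mat_diag_mult_vec_le) auto
  then show ?thesis
    using unitary_mat_vnorm_mult_vec[OF unitary_mat_adjoint_mat[OF X] x] by simp
qed

lemma ordered_svd_singular_value_le:
  assumes A: "ordered_svd n A U a X" and B: "ordered_svd n B V b W" and k: "k < n"
  shows "b k \<le> a k + spec_norm (B - A)"
proof -
  have Ac: "A \<in> carrier_mat n n" and Bc: "B \<in> carrier_mat n n"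
    using ordered_svd_carrier[OF A] ordered_svd_carrier[OF B] .
  have W: "unitary_mat n W" and X: "unitary_mat n X"
    using A B unfolding ordered_svd_def by blast+
  have Wc: "W \<in> carrier_mat n n" and Xc: "adjoint_mat X \<in> carrier_mat n n"
    using unitary_mat_carrier[OF W] unitary_mat_carrier[OF unitary_mat_adjoint_mat[OF X]] .
  \<comment> \<open>\<open>x = W c\<close> lies in the span of the top \<open>k + 1\<close> right singular vectors of \<open>B\<close>
    and is orthogonal to the top \<open>k\<close> right singular vectors of \<open>A\<close>.\<close>
  obtain c where c: "c \<in> carrier_vec n" "c \<noteq> 0\<^sub>v n"
    and c_supp: "\<And>j. k < j \<Longrightarrow> j < n \<Longrightarrow> c $ j = 0"
    and c_orth: "\<And>j. j < k \<Longrightarrow> ((adjoint_mat X * W) *\<^sub>v c) $ j = 0"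
    using homogeneous_system_nontrivial_solution[of "adjoint_mat X * W" n k "k + 1"] Xc Wc k
    by (auto simp: Suc_le_eq)
  define x where "x = W *\<^sub>v c"
  have x: "x \<in> carrier_vec n" and vnorm_x: "vnorm x = vnorm c"
    unfolding x_def using Wc c unitary_mat_vnorm_mult_vec[OF W c(1)] by auto
  have "vnorm c \<noteq> 0"
    using c vnorm_eq_0_iff[of c] by auto
  then have pos: "0 < vnorm c"
    using vnorm_nonneg[of c] by linarith
  have "b k * vnorm c \<le> vnorm (B *\<^sub>v x)"
    unfolding x_def using B c(1) k c_supp by (rule ordered_svd_vnorm_mult_vec_ge)
  also have "B *\<^sub>v x = A *\<^sub>v x + (B - A) *\<^sub>v x"
  proof -
    have "B = A + (B - A)"
      using Ac Bc by (intro eq_matI) auto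
    then show ?thesis
      using Ac Bc x by (metis add_mult_distrib_mat_vec minus_carrier_mat)
  qed
  also have "vnorm \<dots> \<le> vnorm (A *\<^sub>v x) + vnorm ((B - A) *\<^sub>v x)"
    using Ac Bc by (intro vnorm_add_le) simp
  also have "vnorm (A *\<^sub>v x) \<le> a k * vnorm c"
  proof -
    have "adjoint_mat X *\<^sub>v x = (adjoint_mat X * W) *\<^sub>v c"
      unfolding x_def using Xc Wc c by (simp add: assoc_mult_mat_vec)
    then show ?thesis
      using ordered_svd_vnorm_mult_vec_le[OF A x k] c_orth vnorm_x by simp
  qed
  also have "vnorm ((B - A) *\<^sub>v x) \<le> spec_norm (B - A) * vnorm c"
    using spec_norm_mult_vec_le[OF minus_carrier_mat[OF Ac, of B] x] vnorm_x by simp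
  finally show ?thesis
    using pos by (simp add: distrib_right[symmetric])
qed

lemma ordered_svd_singular_value_perturbation:
  assumes A: "ordered_svd n A U a X" and B: "ordered_svd n B V b W" and k: "k < n"
  shows "\<bar>b k - a k\<bar> \<le> spec_norm (B - A)"
  using ordered_svd_singular_value_le[OF A B k] ordered_svd_singular_value_le[OF B A k]
    spec_norm_minus_commute[OF ordered_svd_carrier[OF A] ordered_svd_carrier[OF B]]
  by linarith

lemma eigendecomp_perturbation_singular_value:
  assumes eig: "psd_ordered_eigendecomp n A U lam" and H: "H \<in> carrier_mat n n"
    and svd: "ordered_svd n (A + H) V s W" and i: "i < n"
  shows "\<bar>s i - lam (i + 1)\<bar> \<le> spec_norm H"
proof -
  have "A + H - A = H"
    using ordered_svd_carrier[OF ordered_svd_of_eigendecomp[OF eig]] H by (intro eq_matI) auto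
  then show ?thesis
    using ordered_svd_singular_value_perturbation[OF ordered_svd_of_eigendecomp[OF eig] svd i] by simp
qed

section \<open>Truncating a perturbed positive semidefinite matrix\<close>

lemma vnorm_psd_shift_ge:
  assumes U: "unitary_mat n U" and A: "A = U * mat_diag n (\<lambda>i. complex_of_real (l i)) * adjoint_mat U"
    and l: "\<And>i. 0 \<le> l i" and t: "0 \<le> t" and y: "y \<in> carrier_vec n"
  shows "t * vnorm y \<le> vnorm (A *\<^sub>v y + complex_of_real t \<cdot>\<^sub>v y)"
proof -
  have Uc: "U \<in> carrier_mat n n" and Uc': "adjoint_mat U \<in> carrier_mat n n"
    using U unitary_mat_carrier unitary_mat_adjoint_mat by blast+
  define b where "b = adjoint_mat U *\<^sub>v y"
  have b: "b \<in> carrier_vec n"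
    unfolding b_def using Uc' y by simp
  have "A *\<^sub>v y + complex_of_real t \<cdot>\<^sub>v y
      = U *\<^sub>v (mat_diag n (\<lambda>i. complex_of_real (l i)) *\<^sub>v b) + U *\<^sub>v (complex_of_real t \<cdot>\<^sub>v b)"
    unfolding A b_def using Uc Uc' y unitary_mat_mult_vec_adjoint_cancel[OF U y]
    by (simp add: mult_mat_vec_triple mult_mat_vec)
  also have "\<dots> = U *\<^sub>v (mat_diag n (\<lambda>i. complex_of_real (l i + t)) *\<^sub>v b)"
  proof -
    have "mat_diag n (\<lambda>i. complex_of_real (l i)) *\<^sub>v b + complex_of_real t \<cdot>\<^sub>v b
        = mat_diag n (\<lambda>i. complex_of_real (l i + t)) *\<^sub>v b"
      using b by (intro eq_vecI) (auto simp: mat_diag_mult_vec algebra_simps)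
    moreover have "U *\<^sub>v (mat_diag n (\<lambda>i. complex_of_real (l i)) *\<^sub>v b) + U *\<^sub>v (complex_of_real t \<cdot>\<^sub>v b)
        = U *\<^sub>v (mat_diag n (\<lambda>i. complex_of_real (l i)) *\<^sub>v b + complex_of_real t \<cdot>\<^sub>v b)"
      using b by (intro mult_add_distrib_mat_vec[symmetric, OF Uc mult_mat_vec_carrier[OF mat_diag_dim b]]) simp
    ultimately show ?thesis
      by simp
  qed
  finally have "vnorm (A *\<^sub>v y + complex_of_real t \<cdot>\<^sub>v y) = vnorm (mat_diag n (\<lambda>i. complex_of_real (l i + t)) *\<^sub>v b)"
    using unitary_mat_vnorm_mult_vec[OF U mult_mat_vec_carrier[OF mat_diag_dim b]] by simp
  moreover have "t * vnorm b \<le> vnorm (mat_diag n (\<lambda>i. complex_of_real (l i + t)) *\<^sub>v b)"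
    using b t l by (intro vnorm_mat_diag_mult_vec_ge) (auto simp del: of_real_add)
  moreover have "vnorm b = vnorm y"
    unfolding b_def using unitary_mat_adjoint_mat[OF U] y by (rule unitary_mat_vnorm_mult_vec)
  ultimately show ?thesis
    by simp
qed

lemma hermitian_ordered_svd_swaps_cols:
  assumes herm: "hermitian_mat A" and svd: "ordered_svd n A V s W" and i: "i < n"
  shows "A *\<^sub>v col V i = complex_of_real (s i) \<cdot>\<^sub>v col W i"
    and "A *\<^sub>v col W i = complex_of_real (s i) \<cdot>\<^sub>v col V i"
proof -
  define S where "S = mat_diag n (\<lambda>i. complex_of_real (s i))"
  have V: "unitary_mat n V" and W: "unitary_mat n W" and AVW: "A = V * S * adjoint_mat W"
    using svd unfolding ordered_svd_def S_def by blast+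
  have AWV: "A = W * S * adjoint_mat V"
    unfolding S_def using herm svd by (rule ordered_svd_hermitian_swap)
  have Vc: "V \<in> carrier_mat n n" "adjoint_mat V \<in> carrier_mat n n"
    and Wc: "W \<in> carrier_mat n n" "adjoint_mat W \<in> carrier_mat n n"
    and Sc: "S \<in> carrier_mat n n"
    using V W unitary_mat_carrier unitary_mat_adjoint_mat unfolding S_def by auto
  define e where "e = (unit_vec n i :: complex vec)"
  have e: "e \<in> carrier_vec n" and Se: "S *\<^sub>v e = complex_of_real (s i) \<cdot>\<^sub>v e"
    unfolding e_def S_def using i by (auto simp: mat_diag_mult_vec intro!: eq_vecI)
  have cols: "col V i = V *\<^sub>v e" "col W i = W *\<^sub>v e"
    unfolding e_def using Vc Wc i by (simp_all add: mult_mat_vec_unit_vec)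
  show "A *\<^sub>v col V i = complex_of_real (s i) \<cdot>\<^sub>v col W i"
    unfolding cols AWV mult_mat_vec_triple[OF Wc(1) Sc Vc(2) mult_mat_vec_carrier[OF Vc(1) e]]
    using Wc e by (simp add: unitary_mat_adjoint_mult_vec_cancel[OF V e] Se mult_mat_vec)
  show "A *\<^sub>v col W i = complex_of_real (s i) \<cdot>\<^sub>v col V i"
    unfolding cols AVW mult_mat_vec_triple[OF Vc(1) Sc Wc(2) mult_mat_vec_carrier[OF Wc(1) e]]
    using Vc e by (simp add: unitary_mat_adjoint_mult_vec_cancel[OF W e] Se mult_mat_vec)
qed

lemma ordered_svd_col_eq_of_psd_perturbation:
  assumes eig: "psd_ordered_eigendecomp n A U lam" and H: "hermitian_mat H" "H \<in> carrier_mat n n"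
    and svd: "ordered_svd n (A + H) V s W" and i: "i < n" and gt: "spec_norm H < s i"
  shows "col V i = col W i"
proof -
  have U: "unitary_mat n U" and A: "A = U * mat_diag n (\<lambda>i. complex_of_real (lam (i + 1))) * adjoint_mat U"
    and lam: "\<And>j. 0 \<le> lam j"
    using eig unfolding psd_ordered_eigendecomp_def by blast+
  have Ac: "A \<in> carrier_mat n n"
    using ordered_svd_carrier[OF ordered_svd_of_eigendecomp[OF eig]] .
  have Vc: "V \<in> carrier_mat n n" and Wc: "W \<in> carrier_mat n n"
    using svd unitary_mat_carrier unfolding ordered_svd_def by blast+
  have "hermitian_mat (A + H)"
    using hermitian_mat_add[OF hermitian_mat_of_eigendecomp[OF eig] H(1)] Ac H(2) by simp
  note swap_V = hermitian_ordered_svd_swaps_cols(1)[OF this svd i]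
    and swap_W = hermitian_ordered_svd_swaps_cols(2)[OF this svd i]
  have colV: "col V i \<in> carrier_vec n" and colW: "col W i \<in> carrier_vec n"
    using Vc Wc by (simp_all add: carrier_vecI)
  define y where "y = col V i - col W i"
  have y: "y \<in> carrier_vec n"
    unfolding y_def using Vc Wc i by simp
  have "A *\<^sub>v y + complex_of_real (s i) \<cdot>\<^sub>v y = - (H *\<^sub>v y)"
  proof (rule eq_vecI)
    fix k assume "k < dim_vec (- (H *\<^sub>v y))"
    then have k: "k < n"
      using H(2) by simp
    have "(A *\<^sub>v col V i) $ k = complex_of_real (s i) * col W i $ k - (H *\<^sub>v col V i) $ k"
      using arg_cong[OF swap_V, of "\<lambda>v. v $ k"] add_mult_distrib_mat_vec[OF Ac H(2) colV] H(2) Wc k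
      by (simp add: eq_diff_eq)
    moreover have "(A *\<^sub>v col W i) $ k = complex_of_real (s i) * col V i $ k - (H *\<^sub>v col W i) $ k"
      using arg_cong[OF swap_W, of "\<lambda>v. v $ k"] add_mult_distrib_mat_vec[OF Ac H(2) colW] H(2) Vc k
      by (simp add: eq_diff_eq)
    ultimately show "(A *\<^sub>v y + complex_of_real (s i) \<cdot>\<^sub>v y) $ k = (- (H *\<^sub>v y)) $ k"
      unfolding y_def using Ac H(2) Vc Wc i k
      by (simp add: mult_minus_distrib_mat_vec algebra_simps) (simp add: add.assoc[symmetric] add.commute)
  qed (use Ac H(2) y in simp)
  moreover have "0 \<le> s i"
    using gt spec_norm_nonneg[OF H(2)] i by fastforce
  ultimately have "s i * vnorm y \<le> vnorm (H *\<^sub>v y)"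
    using vnorm_psd_shift_ge[OF U A lam _ y] by fastforce
  also have "\<dots> \<le> spec_norm H * vnorm y"
    using H(2) y by (rule spec_norm_mult_vec_le)
  finally have "vnorm y = 0"
    using gt vnorm_nonneg[of y] by (metis less_eq_real_def linorder_not_le mult_strict_right_mono)
  then show ?thesis
    using y Vc Wc i unfolding y_def vnorm_eq_0_iff by (intro eq_vecI) (auto dest: vec_eq_iff[THEN iffD1])
qed

lemma trunc_rank_eq:
  assumes V: "V \<in> carrier_mat n n" and X: "X \<in> carrier_mat n n" and r: "r \<le> n"
    and cols: "\<And>j. j < r \<Longrightarrow> col X j = col V j"
  shows "trunc_rank n r V s
    = V * mat_diag n (\<lambda>i. if i < r then complex_of_real (s i) else 0) * adjoint_mat X"
proof -
  define Vr where "Vr = mat n r (\<lambda>(i, j). V $$ (i, j))"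
  have Vr: "Vr \<in> carrier_mat n r"
    unfolding Vr_def by simp
  have X_eq: "X $$ (b, j) = V $$ (b, j)" if "j < r" "b < n" for b j
    using arg_cong[OF cols[OF that(1)], of "\<lambda>v. v $ b"] that V X r by simp
  show ?thesis
    unfolding trunc_rank_def Vr_def[symmetric] Let_def
  proof (rule eq_matI)
    fix a b assume "a < dim_row (V * mat_diag n (\<lambda>i. if i < r then complex_of_real (s i) else 0) * adjoint_mat X)"
      "b < dim_col (V * mat_diag n (\<lambda>i. if i < r then complex_of_real (s i) else 0) * adjoint_mat X)"
    then have a: "a < n" and b: "b < n"
      using V X by auto
    have "(Vr * mat_diag r (\<lambda>i. complex_of_real (s i)) * adjoint_mat Vr) $$ (a, b)
        = (\<Sum>j<r. V $$ (a, j) * complex_of_real (s j) * cnj (V $$ (b, j)))"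
      unfolding mat_diag_mult_right[OF Vr] using a b Vr r
      by (simp add: scalar_prod_def atLeast0LessThan Vr_def)
    also have "\<dots> = (\<Sum>j<n. V $$ (a, j) * (if j < r then complex_of_real (s j) else 0) * cnj (X $$ (b, j)))"
      using r b X_eq by (intro sum.mono_neutral_cong_left) auto
    also have "\<dots> = (V * mat_diag n (\<lambda>i. if i < r then complex_of_real (s i) else 0) * adjoint_mat X) $$ (a, b)"
      using a b V X by (simp add: mat_diag_mult_right[OF V] scalar_prod_def atLeast0LessThan)
    finally show "(Vr * mat_diag r (\<lambda>i. complex_of_real (s i)) * adjoint_mat Vr) $$ (a, b)
        = (V * mat_diag n (\<lambda>i. if i < r then complex_of_real (s i) else 0) * adjoint_mat X) $$ (a, b)" .
  qed (use V X Vr in auto)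
qed

lemma eig_gap_le: "eig_gap lam r \<le> lam r"
proof -
  have "finite {\<bar>lam j - lam (j + 1)\<bar> | j. 1 \<le> j \<and> j \<le> r - 1}"
    by (rule finite_subset[of _ "(\<lambda>j. \<bar>lam j - lam (j + 1)\<bar>) ` {1..r - 1}"]) auto
  then show ?thesis
    unfolding eig_gap_def by (intro Min_le) auto
qed

lemma trunc_rank_eq_truncated_svd:
  assumes eig: "psd_ordered_eigendecomp n A U lam" and H: "hermitian_mat H" "H \<in> carrier_mat n n"
    and svd: "ordered_svd n (A + H) V s W" and r: "1 \<le> r" "r \<le> n"
    and small: "2 * spec_norm H < lam r"
  shows "trunc_rank n r V s = V * mat_diag n (\<lambda>i. if i < r then complex_of_real (s i) else 0) * adjoint_mat W"
proof (rule trunc_rank_eq[OF _ _ r(2)])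
  show "V \<in> carrier_mat n n" "W \<in> carrier_mat n n"
    using svd unitary_mat_carrier unfolding ordered_svd_def by blast+
  fix j assume j: "j < r"
  have "lam r \<le> lam (j + 1)"
    using eig j unfolding psd_ordered_eigendecomp_def by auto
  then have "spec_norm H < s j"
    using eigendecomp_perturbation_singular_value[OF eig H(2) svd, of j] j r small by linarith
  then show "col W j = col V j"
    using ordered_svd_col_eq_of_psd_perturbation[OF eig H svd] j r by fastforce
qed

lemma trunc_rank_error_if_small_perturbation:
  assumes eig: "psd_ordered_eigendecomp n A U lam" and H: "hermitian_mat H" "H \<in> carrier_mat n n"
    and svd: "ordered_svd n (A + H) V s W" and r: "1 \<le> r" "r \<le> n"
    and small: "2 * spec_norm H < lam r"
  shows "spec_norm (A - trunc_rank n r V s) \<le> lam (r + 1) + 2 * spec_norm H"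
proof -
  define h where "h = spec_norm H"
  have n: "0 < n"
    using r by simp
  have Ac: "A \<in> carrier_mat n n"
    using ordered_svd_carrier[OF ordered_svd_of_eigendecomp[OF eig]] .
  have lam: "\<And>j k. 1 \<le> j \<Longrightarrow> j \<le> k \<Longrightarrow> lam k \<le> lam j" "\<And>j. 0 \<le> lam j"
    using eig unfolding psd_ordered_eigendecomp_def by blast+
  have V: "unitary_mat n V" and W: "unitary_mat n W"
    and QVW: "A + H = V * mat_diag n (\<lambda>i. complex_of_real (s i)) * adjoint_mat W"
    and s_nonneg: "\<And>i. i < n \<Longrightarrow> 0 \<le> s i"
    using svd unfolding ordered_svd_def by blast+
  have Vc: "V \<in> carrier_mat n n" and Wc: "W \<in> carrier_mat n n"
    using V W by (simp_all add: unitary_mat_carrier)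
  note Qr = trunc_rank_eq_truncated_svd[OF eig H svd r small]
  then have Qrc: "trunc_rank n r V s \<in> carrier_mat n n"
    using Vc Wc by (simp add: mat_diag_sandwich_carrier)
  have "A + H - trunc_rank n r V s
      = V * mat_diag n (\<lambda>i. complex_of_real (s i) - (if i < r then complex_of_real (s i) else 0)) * adjoint_mat W"
    unfolding QVW Qr using Vc Wc by (intro mat_diag_sandwich_diff) auto
  moreover have "cmod (complex_of_real (s i) - (if i < r then complex_of_real (s i) else 0)) \<le> lam (r + 1) + h"
    if "i < n" for i
  proof (cases "i < r")
    case False
    then have "lam (i + 1) \<le> lam (r + 1)"
      by (intro lam(1)) auto
    then show ?thesis
      using False eigendecomp_perturbation_singular_value[OF eig H(2) svd that] s_nonneg[OF that]
      unfolding h_def by simp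
  qed (use lam(2) spec_norm_nonneg[OF H(2) n] in \<open>simp add: h_def\<close>)
  ultimately have "spec_norm (A + H - trunc_rank n r V s) \<le> lam (r + 1) + h"
    using spec_norm_unitary_diag_le[OF V W n] by presburger
  moreover have "A - trunc_rank n r V s = (A + H - trunc_rank n r V s) - H"
    using Ac H(2) Qrc by (intro eq_matI) auto
  ultimately show ?thesis
    using spec_norm_diff_le[OF minus_carrier_mat[OF Qrc, of "A + H"] H(2) n] unfolding h_def by simp
qed

lemma trunc_rank_error_crude:
  assumes eig: "psd_ordered_eigendecomp n A U lam" and H: "H \<in> carrier_mat n n"
    and svd: "ordered_svd n (A + H) V s W" and r: "1 \<le> r" "r \<le> n"
  shows "spec_norm (A - trunc_rank n r V s) \<le> 2 * lam 1 + spec_norm H"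
proof -
  have n: "0 < n"
    using r by simp
  have U: "unitary_mat n U" and A: "A = U * mat_diag n (\<lambda>i. complex_of_real (lam (i + 1))) * adjoint_mat U"
    and lam: "\<And>j k. 1 \<le> j \<Longrightarrow> j \<le> k \<Longrightarrow> lam k \<le> lam j" "\<And>j. 0 \<le> lam j"
    using eig unfolding psd_ordered_eigendecomp_def by blast+
  have V: "unitary_mat n V"
    and s: "\<And>i j. i \<le> j \<Longrightarrow> j < n \<Longrightarrow> s j \<le> s i" "\<And>i. i < n \<Longrightarrow> 0 \<le> s i"
    using svd unfolding ordered_svd_def by blast+
  have Vc: "V \<in> carrier_mat n n"
    using V by (rule unitary_mat_carrier)
  have Qr: "trunc_rank n r V s = V * mat_diag n (\<lambda>i. if i < r then complex_of_real (s i) else 0) * adjoint_mat V"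
    using trunc_rank_eq[OF Vc Vc r(2)] by blast
  have "spec_norm A \<le> lam 1"
    unfolding A using lam by (intro spec_norm_unitary_diag_le[OF U U n]) auto
  moreover have "spec_norm (trunc_rank n r V s) \<le> s 0"
    unfolding Qr using s by (intro spec_norm_unitary_diag_le[OF V V n]) auto
  moreover have "s 0 \<le> lam 1 + spec_norm H"
    using eigendecomp_perturbation_singular_value[OF eig H svd n] by simp
  moreover have "spec_norm (A - trunc_rank n r V s) \<le> spec_norm A + spec_norm (trunc_rank n r V s)"
    using Vc by (intro spec_norm_diff_le[OF ordered_svd_carrier[OF ordered_svd_of_eigendecomp[OF eig]] _ n])
      (simp add: Qr mat_diag_sandwich_carrier)
  ultimately show ?thesis
    by linarith
qed

lemma trunc_rank_error_bound:
  assumes eig: "psd_ordered_eigendecomp n A U lam" and H: "hermitian_mat H" "H \<in> carrier_mat n n"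
    and svd: "ordered_svd n (A + H) V s W" and r: "1 \<le> r" "r \<le> n" and gap: "0 < eig_gap lam r"
  shows "spec_norm (A - trunc_rank n r V s) \<le> 5 * (lam (r + 1) + lam 1 / eig_gap lam r * spec_norm H)"
proof -
  define h \<delta> where "h = spec_norm H" and "\<delta> = eig_gap lam r"
  define \<rho> where "\<rho> = lam 1 / \<delta>"
  have lam: "\<And>j k. 1 \<le> j \<Longrightarrow> j \<le> k \<Longrightarrow> lam k \<le> lam j" "\<And>j. 0 \<le> lam j"
    using eig unfolding psd_ordered_eigendecomp_def by blast+
  have h: "0 \<le> h"
    unfolding h_def using H(2) r by (intro spec_norm_nonneg) auto
  have \<delta>: "0 < \<delta>" "\<delta> \<le> lam r"
    unfolding \<delta>_def using gap eig_gap_le by auto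
  have "lam r \<le> lam 1"
    using r by (intro lam(1)) auto
  then have "1 \<le> \<rho>"
    unfolding \<rho>_def using \<delta> by simp
  then have h_le: "h \<le> \<rho> * h"
    using mult_right_mono[OF _ h] by fastforce
  have "spec_norm (A - trunc_rank n r V s) \<le> 5 * (lam (r + 1) + \<rho> * h)"
  proof (cases "2 * h < lam r")
    case True
    then show ?thesis
      using trunc_rank_error_if_small_perturbation[OF eig H svd r True[unfolded h_def]] lam(2)[of "r + 1"] h h_le
      unfolding h_def by (simp add: algebra_simps)
  next
    case False
    have "lam 1 = \<rho> * \<delta>"
      unfolding \<rho>_def using \<delta> by simp
    also have "\<dots> \<le> \<rho> * (2 * h)"
      using False \<delta> \<open>1 \<le> \<rho>\<close> by (intro mult_left_mono) auto
    finally show ?thesis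
      using trunc_rank_error_crude[OF eig H(2) svd r] lam(2)[of "r + 1"] h_le unfolding h_def
      by (simp add: algebra_simps)
  qed
  then show ?thesis
    unfolding \<rho>_def \<delta>_def h_def .
qed

theorem lemma12:
  "\<exists>C>0. \<forall>n r (Qs::complex mat) H U lam V sig W.
     Qs \<in> carrier_mat n n \<longrightarrow> H \<in> carrier_mat n n \<longrightarrow>
     psd_ordered_eigendecomp n Qs U lam \<longrightarrow>
     hermitian_mat H \<longrightarrow>
     ordered_svd n (Qs + H) V sig W \<longrightarrow>
     1 \<le> r \<longrightarrow> r \<le> n \<longrightarrow>
     eig_gap lam r > 0 \<longrightarrow>
     spec_norm (Qs - trunc_rank n r V sig)
       \<le> C * (lam (r+1) + lam 1 / eig_gap lam r * spec_norm H)"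
  by (intro exI[of _ "5 :: real"] conjI allI impI trunc_rank_error_bound) auto

end
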